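(* Let $(I,<,\mathcal X,R,\mathrm{Mor})$ be a groupoid spine such that $R$ is symmetric and $|I|\ge 3$. Then $(I,<,\mathcal X,R,\mathrm{Mor})$ extends to a groupoid.
   Context: A groupoid spine $(I,<,\mathcal X,R,\mathrm{Mor})$ consists of a linear order $(I,<)$, nonempty sets $\mathcal X=\{X_i:i\in I\}$, a nonempty relation $R\subseteq I^2$ containing all $(i,j)$ with $i<j$, and for each $(i,j)\in R$ a nonempty set $\operatorname{Mor}(i,j)$ of bijections $X_i\to X_j$, such that: if $(i,i)\in R$ then $\mathrm{id}_{X_i}\in\operatorname{Mor}(i,i)$; if $(i,j),(j,i)\in R$ and $f\in\operatorname{Mor}(i,j)$ then $f^{-1}\in\operatorname{Mor}(j,i)$; if $(i,j),(j,k),(i,k)\in R$, $f\in\operatorname{Mor}(i,j)$, $g\in\operatorname{Mor}(j,k)$ then $g\circ f\in\operatorname{Mor}(i,k)$. $R$ is symmetric if $(i,j)\in R$ implies $(j,i)\in R$. The spine extends to a groupoid if one can define $\operatorname{Mor}(i,j)$ for $(i,j)\in I^2\setminus R$ (keeping $\operatorname{Mor}(i,j)$ unchanged for $(i,j)\in R$) so that $(I,<,\mathcal X,I^2,\mathrm{Mor})$ is a groupoid spine. *)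

theory Defs
  imports "HOL-Library.FuncSet"
begin

text \<open>The linear order on the index set I is the type class order
  of the index type 'i (so I = UNIV).
  Morphisms are bijections X i -> X j represented as extensional functions
  (value undefined outside X i), so identity, inverse and composition are
  restrict id, restrict (inv_into ...), compose. Mor i j is only relevant for
  (i,j) in R.\<close>

definition groupoid_spine ::
  "('i::linorder \<Rightarrow> 'x set) \<Rightarrow> ('i \<times> 'i) set \<Rightarrow> ('i \<Rightarrow> 'i \<Rightarrow> ('x \<Rightarrow> 'x) set) \<Rightarrow> bool" where
  "groupoid_spine X R Mor \<longleftrightarrow>
     (\<forall>i. X i \<noteq> {}) \<and>
     R \<noteq> {} \<and>
     (\<forall>i j. i < j \<longrightarrow> (i, j) \<in> R) \<and>
     (\<forall>i j. (i, j) \<in> R \<longrightarrow> Mor i j \<noteq> {} \<and>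
        (\<forall>f \<in> Mor i j. bij_betw f (X i) (X j) \<and> f \<in> extensional (X i))) \<and>
     (\<forall>i. (i, i) \<in> R \<longrightarrow> restrict id (X i) \<in> Mor i i) \<and>
     (\<forall>i j. (i, j) \<in> R \<and> (j, i) \<in> R \<longrightarrow>
        (\<forall>f \<in> Mor i j. restrict (inv_into (X i) f) (X j) \<in> Mor j i)) \<and>
     (\<forall>i j k. (i, j) \<in> R \<and> (j, k) \<in> R \<and> (i, k) \<in> R \<longrightarrow>
        (\<forall>f \<in> Mor i j. \<forall>g \<in> Mor j k. compose (X i) g f \<in> Mor i k))"

definition extends_to_groupoid ::
  "('i::linorder \<Rightarrow> 'x set) \<Rightarrow> ('i \<times> 'i) set \<Rightarrow> ('i \<Rightarrow> 'i \<Rightarrow> ('x \<Rightarrow> 'x) set) \<Rightarrow> bool" where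
  "extends_to_groupoid X R Mor \<longleftrightarrow>
     (\<exists>Mor'. (\<forall>i j. (i, j) \<in> R \<longrightarrow> Mor' i j = Mor i j) \<and> groupoid_spine X UNIV Mor')"

end

theory Submission
  imports Defs
begin

text \<open>Since \<open>R\<close> is symmetric and contains every pair \<open>i < j\<close>, only diagonal pairs \<open>(i, i)\<close>
  can be missing from it. For such an \<open>i\<close> let \<open>Mor i i\<close> consist of all loops \<open>h \<circ> f\<close> with
  \<open>f \<in> Mor i k\<close>, \<open>h \<in> Mor k i\<close> and \<open>k \<noteq> i\<close>. A third object makes these loops flexible: a loop
  through \<open>k\<close> can be rerouted through any \<open>p \<noteq> i\<close> by inserting \<open>e\<^sup>-\<^sup>1 \<circ> e\<close> for some
  \<open>e \<in> Mor k p\<close>. Choosing \<open>p\<close> away from the other objects involved, every composite that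
  contains a loop becomes a composite of morphisms between three distinct objects, where
  the spine axioms apply.\<close>

abbreviation inv_betw :: "'a set \<Rightarrow> 'b set \<Rightarrow> ('a \<Rightarrow> 'b) \<Rightarrow> 'b \<Rightarrow> 'a" where
  "inv_betw A B f \<equiv> restrict (inv_into A f) B"

lemma inv_betw_compose:
  assumes f: "bij_betw f A B" and h: "bij_betw h B C"
  shows "inv_betw A C (compose A h f) = compose C (inv_betw A B f) (inv_betw B C h)"
proof
  fix y
  show "inv_betw A C (compose A h f) y = compose C (inv_betw A B f) (inv_betw B C h) y"
  proof (cases "y \<in> C")
    case True
    define z where "z = inv_into B h y"
    have z: "z \<in> B" "h z = y"
      using h True unfolding z_def by (auto simp: bij_betw_def inv_into_into f_inv_into_f)
    define x where "x = inv_into A f z"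
    have x: "x \<in> A" "f x = z"
      using f z unfolding x_def by (auto simp: bij_betw_def inv_into_into f_inv_into_f)
    have "inv_into A (compose A h f) y = x"
      using bij_betw_compose[OF f h] x z by (metis bij_betw_def compose_eq inv_into_f_f)
    then show ?thesis using True z unfolding x_def z_def by (simp add: compose_eq)
  qed (simp add: compose_def)
qed

lemma compose_cancel_inv_betw:
  assumes f: "bij_betw f A B" and e: "bij_betw e B C"
  shows "compose A (compose C h (inv_betw B C e)) (compose A e f) = compose A h f"
proof
  fix x
  show "compose A (compose C h (inv_betw B C e)) (compose A e f) x = compose A h f x"
  proof (cases "x \<in> A")
    case True
    then have "f x \<in> B" "e (f x) \<in> C" using f e by (auto dest: bij_betw_apply)
    then show ?thesis
      using True e by (simp add: compose_eq bij_betw_inv_into_left)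
  qed (simp add: compose_def)
qed

lemma sym_spine_off_diagonal:
  assumes "groupoid_spine X R Mor" "sym R" "i \<noteq> j"
  shows "(i, j) \<in> R"
proof -
  have "(i, j) \<in> R \<or> (j, i) \<in> R"
    using assms(1,3) unfolding groupoid_spine_def by (metis neq_iff)
  then show ?thesis using assms(2) by (auto dest: symD)
qed

locale off_diagonal_spine =
  fixes X :: "'i::linorder \<Rightarrow> 'x set"
    and R :: "('i \<times> 'i) set"
    and Mor :: "'i \<Rightarrow> 'i \<Rightarrow> ('x \<Rightarrow> 'x) set"
  assumes spine: "groupoid_spine X R Mor"
    and off_diagonal: "i \<noteq> j \<Longrightarrow> (i, j) \<in> R"
    and three_objects: "\<exists>a b c :: 'i. a \<noteq> b \<and> b \<noteq> c \<and> a \<noteq> c"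
begin

lemma mor_bij: "(i, j) \<in> R \<Longrightarrow> f \<in> Mor i j \<Longrightarrow> bij_betw f (X i) (X j)"
  and mor_nonempty: "(i, j) \<in> R \<Longrightarrow> Mor i j \<noteq> {}"
  and mor_id: "(i, i) \<in> R \<Longrightarrow> restrict id (X i) \<in> Mor i i"
  and mor_inv: "(i, j) \<in> R \<Longrightarrow> (j, i) \<in> R \<Longrightarrow> f \<in> Mor i j \<Longrightarrow> inv_betw (X i) (X j) f \<in> Mor j i"
  and mor_compose: "(i, j) \<in> R \<Longrightarrow> (j, k) \<in> R \<Longrightarrow> (i, k) \<in> R \<Longrightarrow>
    f \<in> Mor i j \<Longrightarrow> g \<in> Mor j k \<Longrightarrow> compose (X i) g f \<in> Mor i k"
  using spine unfolding groupoid_spine_def by blast+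

lemma mor_bij_off_diagonal: "i \<noteq> j \<Longrightarrow> f \<in> Mor i j \<Longrightarrow> bij_betw f (X i) (X j)"
  by (simp add: mor_bij off_diagonal)

lemma obtain_mor_off_diagonal:
  assumes "i \<noteq> j" obtains f where "f \<in> Mor i j"
  using assms mor_nonempty off_diagonal by blast

lemma mor_inv_off_diagonal: "i \<noteq> j \<Longrightarrow> f \<in> Mor i j \<Longrightarrow> inv_betw (X i) (X j) f \<in> Mor j i"
  by (simp add: mor_inv off_diagonal)

lemma mor_compose_distinct:
  "i \<noteq> j \<Longrightarrow> j \<noteq> k \<Longrightarrow> i \<noteq> k \<Longrightarrow> f \<in> Mor i j \<Longrightarrow> g \<in> Mor j k \<Longrightarrow> compose (X i) g f \<in> Mor i k"
  by (intro mor_compose off_diagonal)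

lemma obtain_third_object: obtains p :: 'i where "p \<noteq> i" "p \<noteq> k"
proof -
  obtain a b c :: 'i where "a \<noteq> b" "b \<noteq> c" "a \<noteq> c" using three_objects by blast
  then show thesis using that by metis
qed

definition loops :: "'i \<Rightarrow> ('x \<Rightarrow> 'x) set" where
  "loops i = {compose (X i) h f | f h k. k \<noteq> i \<and> f \<in> Mor i k \<and> h \<in> Mor k i}"

lemma loopsI: "k \<noteq> i \<Longrightarrow> f \<in> Mor i k \<Longrightarrow> h \<in> Mor k i \<Longrightarrow> compose (X i) h f \<in> loops i"
  unfolding loops_def by blast

lemma loops_factor_through:
  assumes "\<phi> \<in> loops i" "p \<noteq> i"
  obtains f h where "f \<in> Mor i p" "h \<in> Mor p i" "\<phi> = compose (X i) h f"
proof -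
  obtain k f h where k: "k \<noteq> i" "f \<in> Mor i k" "h \<in> Mor k i" "\<phi> = compose (X i) h f"
    using assms(1) unfolding loops_def by blast
  show thesis
  proof (cases "k = p")
    case False
    obtain e where e: "e \<in> Mor k p" by (rule obtain_mor_off_diagonal[OF False])
    let ?f = "compose (X i) e f" and ?h = "compose (X p) h (inv_betw (X k) (X p) e)"
    have "?f \<in> Mor i p"
      using k(1,2) False assms(2) e by (intro mor_compose_distinct) auto
    moreover have "?h \<in> Mor p i"
      using k(1) False assms(2) mor_inv_off_diagonal[OF False e] k(3)
      by (intro mor_compose_distinct) auto
    moreover have "\<phi> = compose (X i) ?h ?f"
      unfolding k(4) using k(1,2) False e
      by (intro compose_cancel_inv_betw[symmetric] mor_bij_off_diagonal) auto
    ultimately show thesis by (rule that)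
  qed (use k that in blast)
qed

lemma loops_bij: "\<phi> \<in> loops i \<Longrightarrow> bij_betw \<phi> (X i) (X i)"
  unfolding loops_def by (auto intro: bij_betw_compose mor_bij_off_diagonal)

lemma compose_mor_loop:
  assumes "\<phi> \<in> loops i" "g \<in> Mor i k" "k \<noteq> i"
  shows "compose (X i) g \<phi> \<in> Mor i k"
proof -
  obtain p where p: "p \<noteq> i" "p \<noteq> k" by (rule obtain_third_object)
  obtain f h where fh: "f \<in> Mor i p" "h \<in> Mor p i" "\<phi> = compose (X i) h f"
    using loops_factor_through[OF assms(1) p(1)] .
  have "compose (X i) g \<phi> = compose (X i) (compose (X p) g h) f"
    using fh p(1) by (simp add: compose_assoc bij_betw_imp_funcset mor_bij_off_diagonal)
  moreover have "compose (X p) g h \<in> Mor p k"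
    using fh assms p by (intro mor_compose_distinct) auto
  ultimately show ?thesis
    using fh assms p mor_compose_distinct[of i p k f "compose (X p) g h"] by auto
qed

lemma compose_loop_mor:
  assumes "\<phi> \<in> loops i" "g \<in> Mor k i" "k \<noteq> i"
  shows "compose (X k) \<phi> g \<in> Mor k i"
proof -
  obtain p where p: "p \<noteq> i" "p \<noteq> k" by (rule obtain_third_object)
  obtain f h where fh: "f \<in> Mor i p" "h \<in> Mor p i" "\<phi> = compose (X i) h f"
    using loops_factor_through[OF assms(1) p(1)] .
  have "compose (X k) \<phi> g = compose (X k) h (compose (X k) f g)"
    unfolding fh(3)
    by (intro compose_assoc[symmetric] bij_betw_imp_funcset mor_bij_off_diagonal assms)
  moreover have "compose (X k) f g \<in> Mor k p"
    using fh assms p by (intro mor_compose_distinct) auto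
  ultimately show ?thesis
    using fh assms p mor_compose_distinct[of k p i "compose (X k) f g" h] by auto
qed

lemma loops_compose: "\<phi> \<in> loops i \<Longrightarrow> \<psi> \<in> loops i \<Longrightarrow> compose (X i) \<psi> \<phi> \<in> loops i"
proof -
  assume \<phi>: "\<phi> \<in> loops i" and \<psi>: "\<psi> \<in> loops i"
  obtain p where p: "p \<noteq> i" by (rule obtain_third_object)
  obtain f h where fh: "f \<in> Mor i p" "h \<in> Mor p i" "\<psi> = compose (X i) h f"
    using loops_factor_through[OF \<psi> p] .
  have "compose (X i) \<psi> \<phi> = compose (X i) h (compose (X i) f \<phi>)"
    unfolding fh(3) by (intro compose_assoc[symmetric] bij_betw_imp_funcset loops_bij \<phi>)
  also have "\<dots> \<in> loops i"
    using p fh \<phi> by (intro loopsI compose_mor_loop) auto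
  finally show ?thesis .
qed

lemma loops_id: "restrict id (X i) \<in> loops i"
proof -
  obtain p where p: "p \<noteq> i" by (rule obtain_third_object)
  obtain f where f: "f \<in> Mor i p" by (rule obtain_mor_off_diagonal[OF p[symmetric]])
  have "restrict id (X i) = compose (X i) (inv_betw (X i) (X p) f) f"
    unfolding id_def using p f by (intro compose_inv_into_id[symmetric] mor_bij_off_diagonal) auto
  also have "\<dots> \<in> loops i"
    using p f by (intro loopsI[of p] mor_inv_off_diagonal) auto
  finally show ?thesis .
qed

lemma loops_inv: "\<phi> \<in> loops i \<Longrightarrow> inv_betw (X i) (X i) \<phi> \<in> loops i"
proof -
  assume "\<phi> \<in> loops i"
  then obtain k f h where k: "k \<noteq> i" "f \<in> Mor i k" "h \<in> Mor k i" "\<phi> = compose (X i) h f"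
    unfolding loops_def by blast
  have "inv_betw (X i) (X i) \<phi> = compose (X i) (inv_betw (X i) (X k) f) (inv_betw (X k) (X i) h)"
    unfolding k(4) using k(1-3) by (intro inv_betw_compose mor_bij_off_diagonal) auto
  also have "\<dots> \<in> loops i"
    using k by (intro loopsI[of k] mor_inv_off_diagonal) auto
  finally show ?thesis .
qed

definition extended_mor :: "'i \<Rightarrow> 'i \<Rightarrow> ('x \<Rightarrow> 'x) set" where
  "extended_mor i j = (if (i, j) \<in> R then Mor i j else loops i)"

lemma extended_mor_off_diagonal: "i \<noteq> j \<Longrightarrow> extended_mor i j = Mor i j"
  by (simp add: extended_mor_def off_diagonal)

lemma extended_mor_diagonal: "(i, i) \<notin> R \<Longrightarrow> extended_mor i i = loops i"
  by (simp add: extended_mor_def)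

lemma extended_mor_compose:
  assumes f: "f \<in> extended_mor i j" and g: "g \<in> extended_mor j k"
  shows "compose (X i) g f \<in> extended_mor i k"
proof (cases "(i, j) \<in> R \<and> (j, k) \<in> R \<and> (i, k) \<in> R")
  case True
  then show ?thesis using f g unfolding extended_mor_def by (auto intro: mor_compose)
next
  case False
  then consider "i = j" "j = k" "(i, i) \<notin> R" | "i = j" "j \<noteq> k" "(i, i) \<notin> R"
    | "i \<noteq> j" "j = k" "(j, j) \<notin> R" | "i \<noteq> j" "j \<noteq> k" "i = k" "(i, i) \<notin> R"
    using off_diagonal[of i j] off_diagonal[of j k] off_diagonal[of i k] by blast
  then show ?thesis
  proof cases
    case 1
    then show ?thesis using f g loops_compose by (simp add: extended_mor_diagonal)
  next
    case 2
    then show ?thesis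
      using f g compose_mor_loop by (simp add: extended_mor_diagonal extended_mor_off_diagonal)
  next
    case 3
    then show ?thesis
      using f g compose_loop_mor by (simp add: extended_mor_diagonal extended_mor_off_diagonal)
  next
    case 4
    then show ?thesis
      using f g loopsI[of j i] by (simp add: extended_mor_diagonal extended_mor_off_diagonal)
  qed
qed

lemma groupoid_spine_extended_mor: "groupoid_spine X UNIV extended_mor"
proof -
  have "bij_betw f (X i) (X j)" if "f \<in> extended_mor i j" for f i j
    using that mor_bij loops_bij off_diagonal unfolding extended_mor_def
    by (cases "i = j") (auto split: if_splits)
  moreover have "f \<in> extensional (X i)" if "f \<in> extended_mor i j" for f i j
    using that spine unfolding extended_mor_def loops_def groupoid_spine_def
    by (auto split: if_splits)
  moreover have "inv_betw (X i) (X j) f \<in> extended_mor j i" if "f \<in> extended_mor i j" for f i j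
    using that mor_inv loops_inv off_diagonal unfolding extended_mor_def
    by (cases "i = j") (auto split: if_splits)
  moreover have "extended_mor i j \<noteq> {}" for i j
    using mor_nonempty loops_id unfolding extended_mor_def by (cases "(i, j) \<in> R") auto
  moreover have "restrict id (X i) \<in> extended_mor i i" for i
    using mor_id loops_id unfolding extended_mor_def by auto
  moreover have "\<forall>i. X i \<noteq> {}" using spine unfolding groupoid_spine_def by blast
  ultimately show ?thesis
    unfolding groupoid_spine_def by (blast intro: extended_mor_compose)
qed

lemma extends_to_groupoid: "extends_to_groupoid X R Mor"
  unfolding extends_to_groupoid_def
  by (intro exI[of _ extended_mor]) (simp add: extended_mor_def groupoid_spine_extended_mor)

end

theorem theorem7p5:
  fixes X :: "'i::linorder \<Rightarrow> 'x set"
    and R :: "('i \<times> 'i) set"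
    and Mor :: "'i \<Rightarrow> 'i \<Rightarrow> ('x \<Rightarrow> 'x) set"
  assumes "groupoid_spine X R Mor"
    and "sym R"
    and "\<exists>a b c :: 'i. a \<noteq> b \<and> b \<noteq> c \<and> a \<noteq> c"
  shows "extends_to_groupoid X R Mor"
proof -
  interpret off_diagonal_spine X R Mor
    using assms sym_spine_off_diagonal by unfold_locales blast+
  show ?thesis by (rule extends_to_groupoid)
qed

end
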